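(* Let $0<c<1$, $0<p<1\le\beta$, $D\ge3$ an integer, and let $\mathcal G=\{G_1,\dots,G_t\}$ be a family of $(p,\beta)$-jumbled graphs on a common vertex set $V$. Let $\Delta$ be a positive integer with $\Delta\le(1-c)p|V|$ and set $s=2t^{1/2}\beta p^{-1}$. Let $\mathcal F$ be a $[t]$-edge-colored star forest with maximum degree at most $\Delta$ and $|V(\mathcal F)|+5sD<c|V|/2$. Then there exist $V'\subseteq V$ with $|V'|\ge|V|-s$ and a $(2s,D)$-good embedding of $\mathcal F$, regarded as a rooted graph in which every vertex is a root, into $\mathcal G[V']$.
   Context: A graph family $\mathcal G=\{G_1,\dots,G_t\}$ is a collection of $t$ simple graphs on a common finite vertex set $V$; $\mathcal G[V']=\{G_1[V'],\dots,G_t[V']\}$. For $X\subseteq V\times[t]$, $\Gamma_{\mathcal G}(X)=\bigcup_{(v,i)\in X}\{u\in V:uv\in E(G_i)\}$. For reals $0<p<1\le\beta$, a graph $G$ is $(p,\beta)$-jumbled if $\bigl|e_G(X,Y)-p|X||Y|\bigr|\le\beta\sqrt{|X||Y|}$ for all $X,Y\subseteq V(G)$, where $e_G(X,Y)$ is the number of ordered pairs $(x,y)\in X\times Y$ with $xy\in E(G)$. A $[t]$-edge-colored graph $\mathcal H$ is a simple graph with each edge colored in $[t]$; $H_i$ is its spanning subgraph of color-$i$ edges and $\deg_{H_i}(h)$ the number of color-$i$ edges at $h$. An embedding $\phi:\mathcal H\hookrightarrow\mathcal G$ is an injective map $V(\mathcal H)\to V$ with $\phi(x)\phi(y)\in E(G_i)$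 for every edge $xy$ of color $i$. For a rooted graph all of whose vertices are roots, fixed $D$, and an embedding $\phi$ into a family on vertex set $V$, set $R(X,\phi)=|\Gamma_{\mathcal G}(X)\setminus\phi(V(\mathcal H))|-\sum_{(v,i)\in X}[D-\deg_{H_i}(\phi^{-1}(v))]$ for $X\subseteq V\times[t]$, with $\deg_{H_i}(\phi^{-1}(v))=0$ if $v\notin\phi(V(\mathcal H))$; $\phi$ is $(s,D)$-good if $R(X,\phi)\ge0$ for every $X$ with $|X|\le s$ (for $\mathcal G[V']$, $V$ is replaced by $V'$ and $\Gamma$ computed in $\mathcal G[V']$). A star forest is a graph each of whose components is a star. *)

theory Defs
  imports Complex_Main
begin

definition simple_graph_on :: "'v set \<Rightarrow> ('v \<Rightarrow> 'v \<Rightarrow> bool) \<Rightarrow> bool" where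
  "simple_graph_on V E \<longleftrightarrow> (\<forall>u v. E u v \<longrightarrow> u \<in> V \<and> v \<in> V \<and> u \<noteq> v \<and> E v u)"

definition e_count :: "('v \<Rightarrow> 'v \<Rightarrow> bool) \<Rightarrow> 'v set \<Rightarrow> 'v set \<Rightarrow> nat" where
  "e_count E X Y = card {(x, y). x \<in> X \<and> y \<in> Y \<and> E x y}"

definition jumbled :: "'v set \<Rightarrow> ('v \<Rightarrow> 'v \<Rightarrow> bool) \<Rightarrow> real \<Rightarrow> real \<Rightarrow> bool" where
  "jumbled V E p \<beta> \<longleftrightarrow> simple_graph_on V E \<and>
     (\<forall>X Y. X \<subseteq> V \<longrightarrow> Y \<subseteq> V \<longrightarrow>
        \<bar>real (e_count E X Y) - p * real (card X) * real (card Y)\<bar>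
          \<le> \<beta> * sqrt (real (card X) * real (card Y)))"

definition colored_graph :: "'h set \<Rightarrow> ('h \<Rightarrow> 'h \<Rightarrow> bool) \<Rightarrow> ('h \<Rightarrow> 'h \<Rightarrow> nat) \<Rightarrow> nat \<Rightarrow> bool" where
  "colored_graph VH EH col t \<longleftrightarrow> finite VH \<and> simple_graph_on VH EH \<and>
     (\<forall>x y. EH x y \<longrightarrow> col x y = col y x \<and> col x y \<in> {1..t})"

definition colored_deg :: "('h \<Rightarrow> 'h \<Rightarrow> bool) \<Rightarrow> ('h \<Rightarrow> 'h \<Rightarrow> nat) \<Rightarrow> nat \<Rightarrow> 'h \<Rightarrow> nat" where
  "colored_deg EH col i h = card {y. EH h y \<and> col h y = i}"

text \<open>Every connected component is a star (all its edges meet a common centre).\<close>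
definition star_forest :: "'h set \<Rightarrow> ('h \<Rightarrow> 'h \<Rightarrow> bool) \<Rightarrow> bool" where
  "star_forest VH EH \<longleftrightarrow> (\<forall>x\<in>VH. \<exists>c\<in>{y. EH\<^sup>*\<^sup>* x y}.
     \<forall>u v. EH\<^sup>*\<^sup>* x u \<longrightarrow> EH\<^sup>*\<^sup>* x v \<longrightarrow> EH u v \<longrightarrow> u = c \<or> v = c)"

definition max_degree_le :: "'h set \<Rightarrow> ('h \<Rightarrow> 'h \<Rightarrow> bool) \<Rightarrow> nat \<Rightarrow> bool" where
  "max_degree_le VH EH \<Delta> \<longleftrightarrow> (\<forall>x\<in>VH. card {y. EH x y} \<le> \<Delta>)"

definition is_embedding :: "'h set \<Rightarrow> ('h \<Rightarrow> 'h \<Rightarrow> bool) \<Rightarrow> ('h \<Rightarrow> 'h \<Rightarrow> nat)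
     \<Rightarrow> (nat \<Rightarrow> 'v \<Rightarrow> 'v \<Rightarrow> bool) \<Rightarrow> 'v set \<Rightarrow> ('h \<Rightarrow> 'v) \<Rightarrow> bool" where
  "is_embedding VH EH col G V' \<phi> \<longleftrightarrow> inj_on \<phi> VH \<and> \<phi> ` VH \<subseteq> V' \<and>
     (\<forall>x y. EH x y \<longrightarrow> G (col x y) (\<phi> x) (\<phi> y))"

definition Gamma :: "(nat \<Rightarrow> 'v \<Rightarrow> 'v \<Rightarrow> bool) \<Rightarrow> 'v set \<Rightarrow> ('v \<times> nat) set \<Rightarrow> 'v set" where
  "Gamma G V' X = {u \<in> V'. \<exists>(v, i)\<in>X. G i u v}"

definition emb_deg :: "'h set \<Rightarrow> ('h \<Rightarrow> 'h \<Rightarrow> bool) \<Rightarrow> ('h \<Rightarrow> 'h \<Rightarrow> nat) \<Rightarrow> ('h \<Rightarrow> 'v)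
     \<Rightarrow> 'v \<Rightarrow> nat \<Rightarrow> nat" where
  "emb_deg VH EH col \<phi> v i =
     (if v \<in> \<phi> ` VH then colored_deg EH col i (the_inv_into VH \<phi> v) else 0)"

definition Rval :: "(nat \<Rightarrow> 'v \<Rightarrow> 'v \<Rightarrow> bool) \<Rightarrow> 'v set \<Rightarrow> 'h set \<Rightarrow> ('h \<Rightarrow> 'h \<Rightarrow> bool)
     \<Rightarrow> ('h \<Rightarrow> 'h \<Rightarrow> nat) \<Rightarrow> nat \<Rightarrow> ('h \<Rightarrow> 'v) \<Rightarrow> ('v \<times> nat) set \<Rightarrow> int" where
  "Rval G V' VH EH col D \<phi> X =
     int (card (Gamma G V' X - \<phi> ` VH))
     - (\<Sum>(v, i)\<in>X. int D - int (emb_deg VH EH col \<phi> v i))"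

text \<open>(s,D)-good embedding into G[V'] (all vertices of the graph are roots).\<close>
definition good_embedding :: "real \<Rightarrow> nat \<Rightarrow> nat \<Rightarrow> (nat \<Rightarrow> 'v \<Rightarrow> 'v \<Rightarrow> bool) \<Rightarrow> 'v set
     \<Rightarrow> 'h set \<Rightarrow> ('h \<Rightarrow> 'h \<Rightarrow> bool) \<Rightarrow> ('h \<Rightarrow> 'h \<Rightarrow> nat) \<Rightarrow> ('h \<Rightarrow> 'v) \<Rightarrow> bool" where
  "good_embedding s D t G V' VH EH col \<phi> \<longleftrightarrow>
     is_embedding VH EH col G V' \<phi> \<and>
     (\<forall>X. X \<subseteq> V' \<times> {1..t} \<longrightarrow> real (card X) \<le> s \<longrightarrow> Rval G V' VH EH col D \<phi> X \<ge> 0)"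

end

theory Submission
  imports Defs
begin

text \<open>
  Set aside a reservoir \<open>T\<close> of about \<open>(3D + 4)s\<close> vertices and call a set \<open>Z\<close> of
  vertex-colour pairs deficient if fewer than \<open>D|Z|\<close> vertices of \<open>T\<close>, other than the
  vertices of \<open>Z\<close>, are adjacent to \<open>Z\<close> in the prescribed colours. Let \<open>B\<close> be a largest
  deficient set with \<open>|B| \<le> 3s\<close>. Most of \<open>T\<close> then has no edge to \<open>B\<close>, and jumbledness
  forces \<open>|B| \<le> s\<close>. If a set \<open>X\<close> of at most \<open>2s\<close> pairs avoiding the vertices of \<open>B\<close> had
  fewer than \<open>D|X|\<close> neighbours in \<open>T\<close>, then \<open>X \<union> B\<close> would be a larger deficient set;
  so after deleting the vertices of \<open>B\<close> every such \<open>X\<close> expands into \<open>T\<close>.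

  The star forest is embedded greedily outside \<open>T\<close>, one star at a time: by jumbledness
  every large enough vertex set \<open>A\<close> contains a vertex with at least \<open>\<Delta>\<close> neighbours in
  \<open>A\<close> in every colour, which receives the centre, and the leaves are placed injectively
  among these neighbours. As the embedding avoids \<open>T\<close>, the expansion into \<open>T\<close> makes
  it \<open>(2s, D)\<close>-good.
\<close>

section \<open>Jumbled graphs\<close>

lemma mult_le_sqrt_imp_sq_le:
  fixes l m y b :: real
  assumes "0 \<le> l" "0 \<le> m" "0 \<le> y" "l * y \<le> b * sqrt (l * m)"
  shows "l * y\<^sup>2 \<le> b\<^sup>2 * m"
proof (cases "l = 0")
  case False
  have "(l * y)\<^sup>2 \<le> (b * sqrt (l * m))\<^sup>2"
    using assms by (intro power_mono) auto
  then have "l * (l * y\<^sup>2) \<le> l * (b\<^sup>2 * m)"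
    using assms(1,2) by (simp add: power_mult_distrib power2_eq_square mult_ac)
  then show ?thesis
    using False assms(1) by simp
qed (simp add: assms(2))

lemma simple_graph_onD:
  assumes "simple_graph_on V E" "E u v"
  shows "E v u" "u \<noteq> v" "u \<in> V" "v \<in> V"
  using assms unfolding simple_graph_on_def by blast+

lemma e_count_eq_sum:
  assumes "finite X" "finite Y"
  shows "e_count E X Y = (\<Sum>x\<in>X. card {y\<in>Y. E x y})"
proof -
  have "{(x, y). x \<in> X \<and> y \<in> Y \<and> E x y} = Sigma X (\<lambda>x. {y\<in>Y. E x y})"
    by auto
  then show ?thesis
    unfolding e_count_def using assms by (simp add: card_SigmaI)
qed

lemma card_eq_sum_card_slices:
  assumes "Z \<subseteq> V \<times> I" "finite V" "finite I"
  shows "card Z = (\<Sum>i\<in>I. card {v. (v, i) \<in> Z})"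
proof -
  have "Z = (\<lambda>(i, v). (v, i)) ` (SIGMA i:I. {v. (v, i) \<in> Z})"
    using assms(1) by force
  moreover have "inj_on (\<lambda>(i, v). (v, i)) (SIGMA i:I. {v. (v, i) \<in> Z})"
    by (auto simp: inj_on_def)
  ultimately have "card Z = card (SIGMA i:I. {v. (v, i) \<in> Z})"
    by (metis card_image)
  also have "\<dots> = (\<Sum>i\<in>I. card {v. (v, i) \<in> Z})"
    using assms by (intro card_SigmaI) (auto intro: finite_subset)
  finally show ?thesis .
qed

lemma jumbled_no_edges_card_le:
  assumes "jumbled V E p \<beta>" "X \<subseteq> V" "Y \<subseteq> V" "0 < p"
    and "\<And>x y. x \<in> X \<Longrightarrow> y \<in> Y \<Longrightarrow> \<not> E x y"
  shows "real (card X) * real (card Y) * p\<^sup>2 \<le> \<beta>\<^sup>2"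
proof -
  have "{(x, y). x \<in> X \<and> y \<in> Y \<and> E x y} = {}"
    using assms(5) by auto
  then have "e_count E X Y = 0"
    unfolding e_count_def by (metis card.empty)
  moreover have "\<bar>real (e_count E X Y) - p * real (card X) * real (card Y)\<bar>
      \<le> \<beta> * sqrt (real (card X) * real (card Y))"
    using assms(1-3) unfolding jumbled_def by blast
  ultimately have "real (card X) * real (card Y) * p \<le> \<beta> * sqrt (real (card X) * real (card Y) * 1)"
    by (simp add: mult_ac)
  then show ?thesis
    using assms(4) by (intro mult_le_sqrt_imp_sq_le[where m = 1, simplified]) auto
qed

lemma jumbled_low_degree_card_le:
  assumes "jumbled V E p \<beta>" "finite V" "A \<subseteq> V" "real \<Delta> \<le> p * real (card A)"
  shows "real (card {v\<in>A. card {w\<in>A. E v w} < \<Delta>}) * (p * real (card A) - real \<Delta>)\<^sup>2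
           \<le> \<beta>\<^sup>2 * real (card A)"
proof -
  define L where "L = {v\<in>A. card {w\<in>A. E v w} < \<Delta>}"
  have "finite A" "L \<subseteq> A"
    using assms(2,3) finite_subset unfolding L_def by auto
  then have "finite L"
    using finite_subset by blast
  have "e_count E L A = (\<Sum>x\<in>L. card {y\<in>A. E x y})"
    using \<open>finite L\<close> \<open>finite A\<close> by (rule e_count_eq_sum)
  also have "\<dots> \<le> card L * \<Delta>"
    using sum_mono[of L "\<lambda>x. card {y\<in>A. E x y}" "\<lambda>_. \<Delta>"] unfolding L_def by auto
  finally have "real (e_count E L A) \<le> real (card L) * real \<Delta>"
    by (metis of_nat_le_iff of_nat_mult)
  moreover have "\<bar>real (e_count E L A) - p * real (card L) * real (card A)\<bar>
      \<le> \<beta> * sqrt (real (card L) * real (card A))"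
    using assms(1,3) \<open>L \<subseteq> A\<close> unfolding jumbled_def by blast
  ultimately have "real (card L) * (p * real (card A) - real \<Delta>)
      \<le> \<beta> * sqrt (real (card L) * real (card A))"
    by (simp add: algebra_simps abs_le_iff)
  then show ?thesis
    unfolding L_def[symmetric] using assms(4) by (intro mult_le_sqrt_imp_sq_le) auto
qed

section \<open>Greedy embedding of star forests\<close>

lemma rtranclp_closed_mem:
  assumes "\<And>x y. x \<in> K \<Longrightarrow> E x y \<Longrightarrow> y \<in> K" "x \<in> K" "E\<^sup>*\<^sup>* x y"
  shows "y \<in> K"
  using assms(3) by (induction rule: rtranclp_induct) (use assms(1,2) in blast)+

lemma rtranclp_Diff_closed:
  assumes "simple_graph_on VH EH" "\<And>x y. x \<in> K \<Longrightarrow> EH x y \<Longrightarrow> y \<in> K"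
    and "u \<in> K - {y. EH\<^sup>*\<^sup>* x y}" "EH u v"
  shows "v \<in> K - {y. EH\<^sup>*\<^sup>* x y}"
  using assms simple_graph_onD(1)[OF assms(1,4)] rtranclp.rtrancl_into_rtrancl[of EH x v u] by blast

lemma star_forest_component:
  assumes "simple_graph_on VH EH" "star_forest VH EH" "x \<in> VH"
  obtains c where "{y. EH\<^sup>*\<^sup>* x y} = insert c {y. EH c y}"
    "\<And>u v. EH\<^sup>*\<^sup>* x u \<Longrightarrow> EH u v \<Longrightarrow> u = c \<or> v = c"
proof -
  obtain c where "EH\<^sup>*\<^sup>* x c"
    and star: "\<And>u v. EH\<^sup>*\<^sup>* x u \<Longrightarrow> EH\<^sup>*\<^sup>* x v \<Longrightarrow> EH u v \<Longrightarrow> u = c \<or> v = c"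
    using assms(2,3) unfolding star_forest_def by blast
  have centre: "u = c \<or> v = c" if "EH\<^sup>*\<^sup>* x u" "EH u v" for u v
    using star that rtranclp.rtrancl_into_rtrancl[OF that] by blast
  have "EH c y" if "EH\<^sup>*\<^sup>* x y" "y \<noteq> c" for y
  proof (cases "y = x")
    case True
    from \<open>EH\<^sup>*\<^sup>* x c\<close> that(2) obtain w where "EH x w"
      unfolding True by (metis converse_rtranclpE)
    then show ?thesis
      using centre[of x w] that(2) True simple_graph_onD(1)[OF assms(1)] by auto
  next
    case False
    with that(1) obtain u where "EH\<^sup>*\<^sup>* x u" "EH u y"
      by (metis rtranclp.cases)
    then show ?thesis
      using centre that(2) by blast
  qed
  moreover have "EH\<^sup>*\<^sup>* x y" if "EH c y" for y
    using \<open>EH\<^sup>*\<^sup>* x c\<close> that by simp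
  ultimately have "{y. EH\<^sup>*\<^sup>* x y} = insert c {y. EH c y}"
    using \<open>EH\<^sup>*\<^sup>* x c\<close> by blast
  then show ?thesis
    using that centre by blast
qed

lemma greedy_distinct_representatives:
  assumes "finite L" "\<And>y. y \<in> L \<Longrightarrow> finite (S y) \<and> card L \<le> card (S y)"
  obtains f where "inj_on f L" "\<And>y. y \<in> L \<Longrightarrow> f y \<in> S y"
  using assms
proof (induction L arbitrary: thesis rule: finite_induct)
  case empty
  then show ?case by simp
next
  case (insert y L)
  obtain f where f: "inj_on f L" "\<And>z. z \<in> L \<Longrightarrow> f z \<in> S z"
    using insert.IH insert.prems(2) by (metis card_insert_le insert_iff order_trans)
  have "card (f ` L) < card (S y)"
    using insert.prems(2)[of y] insert.hyps card_image_le[of L f] by simp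
  then have "\<not> S y \<subseteq> f ` L"
    using insert.hyps(1) by (meson card_mono finite_imageI not_le)
  then obtain w where "w \<in> S y" "w \<notin> f ` L"
    by blast
  have "inj_on (f(y := w)) (insert y L)"
    using f(1) \<open>w \<notin> f ` L\<close> insert.hyps(2) by (auto simp: inj_on_def)
  moreover have "(f(y := w)) z \<in> S z" if "z \<in> insert y L" for z
    using that f(2) \<open>w \<in> S y\<close> insert.hyps(2) by auto
  ultimately show ?case
    using insert.prems(1) by blast
qed

lemma star_embedding:
  assumes "finite L" "card L \<le> \<Delta>" "c \<notin> L" "finite A" "v \<in> A"
    and "\<And>y. y \<in> L \<Longrightarrow> \<Delta> \<le> card {w\<in>A. G (colour y) v w}"
    and "\<And>y. y \<in> L \<Longrightarrow> \<not> G (colour y) v v"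
  obtains \<psi> where "inj_on \<psi> (insert c L)" "\<psi> ` insert c L \<subseteq> A" "\<psi> c = v"
    "\<And>y. y \<in> L \<Longrightarrow> G (colour y) v (\<psi> y)"
proof -
  have "finite {w\<in>A. G (colour y) v w} \<and> card L \<le> card {w\<in>A. G (colour y) v w}" if "y \<in> L" for y
    using assms(2,4) assms(6)[OF that] by simp
  then obtain f where f: "inj_on f L" "\<And>y. y \<in> L \<Longrightarrow> f y \<in> {w\<in>A. G (colour y) v w}"
    using greedy_distinct_representatives[OF assms(1), where S = "\<lambda>y. {w\<in>A. G (colour y) v w}"]
    by blast
  have "f y \<noteq> v" if "y \<in> L" for y
    using f(2)[OF that] assms(7)[OF that] by auto
  then have "inj_on (f(c := v)) (insert c L)"
    using f(1) assms(3) by (auto simp: inj_on_def)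
  moreover have "(f(c := v)) ` insert c L \<subseteq> A" "\<And>y. y \<in> L \<Longrightarrow> G (colour y) v ((f(c := v)) y)"
    using f(2) assms(3,5) by auto
  ultimately show ?thesis
    by (intro that[of "f(c := v)"]) auto
qed

definition embeds_on :: "('h \<Rightarrow> 'h \<Rightarrow> bool) \<Rightarrow> ('h \<Rightarrow> 'h \<Rightarrow> nat) \<Rightarrow> (nat \<Rightarrow> 'v \<Rightarrow> 'v \<Rightarrow> bool)
    \<Rightarrow> 'h set \<Rightarrow> 'v set \<Rightarrow> ('h \<Rightarrow> 'v) \<Rightarrow> bool" where
  "embeds_on EH col G K W \<phi> \<longleftrightarrow>
     inj_on \<phi> K \<and> \<phi> ` K \<subseteq> W \<and> (\<forall>x\<in>K. \<forall>y. EH x y \<longrightarrow> G (col x y) (\<phi> x) (\<phi> y))"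

lemma embeds_on_Un:
  assumes "embeds_on EH col G K W \<phi>" "embeds_on EH col G C (W - \<phi> ` K) \<psi>" "K \<inter> C = {}"
    and "\<And>u y. u \<in> K \<Longrightarrow> EH u y \<Longrightarrow> y \<in> K" "\<And>u y. u \<in> C \<Longrightarrow> EH u y \<Longrightarrow> y \<in> C"
  shows "embeds_on EH col G (K \<union> C) W (\<lambda>z. if z \<in> C then \<psi> z else \<phi> z)"
proof -
  let ?\<chi> = "\<lambda>z. if z \<in> C then \<psi> z else \<phi> z"
  have images: "?\<chi> ` K = \<phi> ` K" "?\<chi> ` C = \<psi> ` C"
    using assms(3) by (auto intro: image_cong)
  have "?\<chi> z = \<phi> z" if "z \<in> K" for z
    using assms(3) that by auto
  then have "inj_on ?\<chi> K" "inj_on ?\<chi> C"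
    using inj_on_cong[of K ?\<chi> \<phi>] inj_on_cong[of C ?\<chi> \<psi>] assms(1,2) unfolding embeds_on_def by simp_all
  moreover have "?\<chi> ` K \<inter> ?\<chi> ` C = {}"
    using assms(2) unfolding images embeds_on_def by blast
  ultimately have "inj_on ?\<chi> (K \<union> C)"
    by (auto simp: inj_on_Un)
  moreover have "?\<chi> ` (K \<union> C) \<subseteq> W"
    using assms(1,2) unfolding image_Un images embeds_on_def by blast
  moreover have "G (col a b) (?\<chi> a) (?\<chi> b)" if "a \<in> K \<union> C" "EH a b" for a b
  proof (cases "a \<in> C")
    case True
    then show ?thesis
      using assms(2,5) that(2) unfolding embeds_on_def by simp
  next
    case False
    then have "a \<in> K" "b \<in> K"
      using that assms(4) by auto
    then show ?thesis
      using assms(1,3) that(2) unfolding embeds_on_def by auto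
  qed
  ultimately show ?thesis
    unfolding embeds_on_def by blast
qed

lemma star_component_embedding:
  assumes H: "colored_graph VH EH col t" "star_forest VH EH" "max_degree_le VH EH \<Delta>"
    and G_simple: "\<And>i. i \<in> {1..t} \<Longrightarrow> simple_graph_on U (G i)"
    and "x \<in> VH" "finite A" "v \<in> A" "\<forall>i\<in>{1..t}. \<Delta> \<le> card {w\<in>A. G i v w}"
  obtains \<psi> where "embeds_on EH col G {y. EH\<^sup>*\<^sup>* x y} A \<psi>"
proof -
  have EH: "simple_graph_on VH EH" "finite VH"
    and col: "\<And>x y. EH x y \<Longrightarrow> col x y = col y x \<and> col x y \<in> {1..t}"
    using H(1) unfolding colored_graph_def by auto
  obtain c where C: "{y. EH\<^sup>*\<^sup>* x y} = insert c {y. EH c y}"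
    and centre: "\<And>u v. EH\<^sup>*\<^sup>* x u \<Longrightarrow> EH u v \<Longrightarrow> u = c \<or> v = c"
    using star_forest_component[OF EH(1) H(2) \<open>x \<in> VH\<close>] by blast
  define L where "L = {y. EH c y}"
  have "EH\<^sup>*\<^sup>* x c"
    using C by (metis insertI1 mem_Collect_eq)
  then have "c \<in> VH"
    using rtranclp_closed_mem[of VH EH, OF _ \<open>x \<in> VH\<close>] simple_graph_onD(4)[OF EH(1)] by blast
  then have "card L \<le> \<Delta>"
    using H(3) unfolding L_def max_degree_le_def by blast
  have "L \<subseteq> VH" "c \<notin> L"
    using simple_graph_onD[OF EH(1)] unfolding L_def by blast+
  then have "finite L"
    using EH(2) finite_subset by blast
  have "\<not> G (col c y) v v" if "y \<in> L" for y
    using simple_graph_onD(2)[OF G_simple] col[of c y] that unfolding L_def by blast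
  moreover have "\<Delta> \<le> card {w\<in>A. G (col c y) v w}" if "y \<in> L" for y
    using assms(8) col[of c y] that unfolding L_def by blast
  ultimately obtain \<psi> where \<psi>: "inj_on \<psi> (insert c L)" "\<psi> ` insert c L \<subseteq> A" "\<psi> c = v"
    "\<And>y. y \<in> L \<Longrightarrow> G (col c y) v (\<psi> y)"
    using star_embedding[OF \<open>finite L\<close> \<open>card L \<le> \<Delta>\<close> \<open>c \<notin> L\<close> assms(6,7), of G "col c"] by blast
  have "G (col a b) (\<psi> a) (\<psi> b)" if "EH\<^sup>*\<^sup>* x a" "EH a b" for a b
    using centre[OF that]
  proof
    assume "a = c"
    then show ?thesis
      using \<psi>(3,4) that(2) unfolding L_def by simp
  next
    assume "b = c"
    then have "a \<in> L"
      using simple_graph_onD(1)[OF EH(1) that(2)] unfolding L_def by simp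
    then have "G (col c a) v (\<psi> a)"
      by (rule \<psi>(4))
    moreover have "col a b = col c a" "col c a \<in> {1..t}"
      using col[of c a] col[OF that(2)] \<open>b = c\<close> \<open>a \<in> L\<close> unfolding L_def by auto
    ultimately show ?thesis
      using simple_graph_onD(1)[OF G_simple] \<psi>(3) \<open>b = c\<close> by metis
  qed
  then have "embeds_on EH col G (insert c L) A \<psi>"
    using \<psi>(1,2) C unfolding embeds_on_def L_def by auto
  then show ?thesis
    using that unfolding C L_def by blast
qed

lemma star_forest_embedding_closed:
  assumes H: "colored_graph VH EH col t" "star_forest VH EH" "max_degree_le VH EH \<Delta>"
    and G_simple: "\<And>i. i \<in> {1..t} \<Longrightarrow> simple_graph_on U (G i)"
    and "finite W"
    and high_degree: "\<And>A. A \<subseteq> W \<Longrightarrow> a\<^sub>0 \<le> real (card A) \<Longrightarrow> \<exists>v\<in>A. \<forall>i\<in>{1..t}. \<Delta> \<le> card {w\<in>A. G i v w}"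
  shows "K \<subseteq> VH \<Longrightarrow> (\<And>x y. x \<in> K \<Longrightarrow> EH x y \<Longrightarrow> y \<in> K) \<Longrightarrow> a\<^sub>0 + real (card K) \<le> real (card W) \<Longrightarrow>
    \<exists>\<phi>. embeds_on EH col G K W \<phi>"
proof (induction "card K" arbitrary: K rule: less_induct)
  case less
  show ?case
  proof (cases "K = {}")
    case False
    then obtain x where "x \<in> K"
      by blast
    have EH: "simple_graph_on VH EH" "finite VH"
      using H(1) unfolding colored_graph_def by auto
    define C where "C = {y. EH\<^sup>*\<^sup>* x y}"
    define K' where "K' = K - C"
    have "C \<subseteq> K" "x \<in> C" "finite K"
      using rtranclp_closed_mem[OF less.prems(2) \<open>x \<in> K\<close>] less.prems(1) EH(2) finite_subset
      unfolding C_def by auto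
    then have "finite C"
      using finite_subset by blast
    then have card_K: "card K = card K' + card C" "card K' < card K"
      unfolding K'_def using card_Diff_subset[OF _ \<open>C \<subseteq> K\<close>] card_mono[OF \<open>finite K\<close> \<open>C \<subseteq> K\<close>]
        card_gt_0_iff[of C] \<open>x \<in> C\<close> by auto
    have C_closed: "y \<in> C" if "u \<in> C" "EH u y" for u y
      using that unfolding C_def by simp
    have K'_closed: "y \<in> K'" if "u \<in> K'" "EH u y" for u y
      using rtranclp_Diff_closed[of VH EH K u x y] EH(1) less.prems(2) that unfolding K'_def C_def by blast
    have "K' \<subseteq> VH" "a\<^sub>0 + real (card K') \<le> real (card W)"
      using less.prems(1,3) card_K(1) unfolding K'_def by auto
    then obtain \<phi> where \<phi>: "embeds_on EH col G K' W \<phi>"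
      using less.hyps[OF card_K(2)] K'_closed by blast
    define A where "A = W - \<phi> ` K'"
    have "finite A"
      using \<open>finite W\<close> unfolding A_def by blast
    have "card W \<le> card (A \<union> \<phi> ` K')"
      using \<open>finite W\<close> \<open>finite A\<close> \<phi> finite_subset unfolding A_def embeds_on_def by (intro card_mono) auto
    also have "\<dots> \<le> card A + card K'"
      using card_Un_le[of A "\<phi> ` K'"] card_image_le[of K' \<phi>] finite_subset[OF \<open>K' \<subseteq> VH\<close> EH(2)] by simp
    finally have "a\<^sub>0 \<le> real (card A)"
      using less.prems(3) card_K(1) by simp
    then obtain v where v: "v \<in> A" "\<forall>i\<in>{1..t}. \<Delta> \<le> card {w\<in>A. G i v w}"
      using high_degree[of A] unfolding A_def by blast
    have "x \<in> VH"
      using less.prems(1) \<open>x \<in> K\<close> by blast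
    then obtain \<psi> where "embeds_on EH col G C A \<psi>"
      using star_component_embedding[OF H G_simple \<open>x \<in> VH\<close> \<open>finite A\<close> v] unfolding C_def by blast
    moreover have "K' \<inter> C = {}"
      unfolding K'_def by blast
    ultimately have "embeds_on EH col G (K' \<union> C) W (\<lambda>z. if z \<in> C then \<psi> z else \<phi> z)"
      using embeds_on_Un[OF \<phi>] K'_closed C_closed unfolding A_def by blast
    moreover have "K = K' \<union> C"
      using \<open>C \<subseteq> K\<close> unfolding K'_def by blast
    ultimately show ?thesis
      by blast
  qed (auto simp: embeds_on_def)
qed

lemma star_forest_embedding:
  assumes H: "colored_graph VH EH col t" "star_forest VH EH" "max_degree_le VH EH \<Delta>"
    and G_simple: "\<And>i. i \<in> {1..t} \<Longrightarrow> simple_graph_on U (G i)"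
    and "finite W"
    and high_degree: "\<And>A. A \<subseteq> W \<Longrightarrow> a\<^sub>0 \<le> real (card A) \<Longrightarrow> \<exists>v\<in>A. \<forall>i\<in>{1..t}. \<Delta> \<le> card {w\<in>A. G i v w}"
    and "a\<^sub>0 + real (card VH) \<le> real (card W)"
  obtains \<phi> where "is_embedding VH EH col G W \<phi>"
proof -
  have EH: "simple_graph_on VH EH"
    using H(1) unfolding colored_graph_def by blast
  have "\<exists>\<phi>. embeds_on EH col G VH W \<phi>"
    by (rule star_forest_embedding_closed[OF H G_simple \<open>finite W\<close> high_degree])
      (use simple_graph_onD(4)[OF EH] assms(7) in auto)
  then show ?thesis
    using that simple_graph_onD(3)[OF EH] unfolding is_embedding_def embeds_on_def by metis
qed

lemma good_embedding_if_reservoir_expands: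
  assumes "is_embedding VH EH col G V' \<phi>" "\<phi> ` VH \<inter> T = {}" "finite V'"
    and "\<And>X. X \<subseteq> V' \<times> {1..t} \<Longrightarrow> real (card X) \<le> r \<Longrightarrow> D * card X \<le> card (Gamma G V' X \<inter> T)"
  shows "good_embedding r D t G V' VH EH col \<phi>"
proof -
  have R_nonneg: "0 \<le> Rval G V' VH EH col D \<phi> X" if "X \<subseteq> V' \<times> {1..t}" "real (card X) \<le> r" for X
  proof -
    have "card (Gamma G V' X \<inter> T) \<le> card (Gamma G V' X - \<phi> ` VH)"
      using assms(2,3) by (intro card_mono) (auto simp: Gamma_def)
    then have "int D * int (card X) \<le> int (card (Gamma G V' X - \<phi> ` VH))"
      using assms(4)[OF that] by (simp flip: of_nat_mult)
    moreover have "(\<Sum>(v, i)\<in>X. int D - int (emb_deg VH EH col \<phi> v i)) \<le> (\<Sum>_\<in>X. int D)"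
      by (intro sum_mono) (simp split: prod.split)
    ultimately show ?thesis
      unfolding Rval_def by (simp add: mult.commute)
  qed
  then show ?thesis
    unfolding good_embedding_def by (intro conjI allI impI assms(1))
qed

section \<open>Families of jumbled graphs\<close>

locale jumbled_family =
  fixes V :: "'v set" and G :: "nat \<Rightarrow> 'v \<Rightarrow> 'v \<Rightarrow> bool" and t :: nat and p \<beta> :: real
  assumes finite_V: "finite V" and p_pos: "0 < p"
    and jumbled_G: "\<And>i. i \<in> {1..t} \<Longrightarrow> jumbled V (G i) p \<beta>"
begin

lemma simple_graph_G: "i \<in> {1..t} \<Longrightarrow> simple_graph_on V (G i)"
  using jumbled_G unfolding jumbled_def by blast

lemma no_edges_card_le:
  assumes "Z \<subseteq> V \<times> {1..t}" "Y \<subseteq> V" "Y \<inter> Gamma G V Z = {}"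
  shows "real (card Z) * real (card Y) * p\<^sup>2 \<le> real t * \<beta>\<^sup>2"
proof -
  define Z\<^sub>i where "Z\<^sub>i i = {v. (v, i) \<in> Z}" for i
  have "real (card (Z\<^sub>i i)) * real (card Y) * p\<^sup>2 \<le> \<beta>\<^sup>2" if i: "i \<in> {1..t}" for i
  proof (rule jumbled_no_edges_card_le[OF jumbled_G[OF i] _ assms(2) p_pos])
    show "Z\<^sub>i i \<subseteq> V"
      using assms(1) unfolding Z\<^sub>i_def by blast
    show "\<not> G i x y" if "x \<in> Z\<^sub>i i" "y \<in> Y" for x y
      using that assms simple_graph_G[OF i] unfolding Z\<^sub>i_def Gamma_def simple_graph_on_def by blast
  qed
  then have "(\<Sum>i\<in>{1..t}. real (card (Z\<^sub>i i)) * (real (card Y) * p\<^sup>2)) \<le> (\<Sum>i\<in>{1..t}. \<beta>\<^sup>2)"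
    by (intro sum_mono) (simp add: mult.assoc)
  moreover have "card Z = (\<Sum>i\<in>{1..t}. card (Z\<^sub>i i))"
    unfolding Z\<^sub>i_def using assms(1) finite_V by (rule card_eq_sum_card_slices) simp
  ultimately show ?thesis
    by (simp add: sum_distrib_right mult.assoc)
qed

lemma exists_high_degree_vertex:
  assumes "A \<subseteq> V" "real \<Delta> < p * real (card A)" "real t * \<beta>\<^sup>2 < (p * real (card A) - real \<Delta>)\<^sup>2"
  shows "\<exists>v\<in>A. \<forall>i\<in>{1..t}. \<Delta> \<le> card {w\<in>A. G i v w}"
proof -
  define L where "L i = {v\<in>A. card {w\<in>A. G i v w} < \<Delta>}" for i
  define d where "d = (p * real (card A) - real \<Delta>)\<^sup>2"
  have "0 < d"
    using assms(2) unfolding d_def by simp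
  have "card (\<Union>i\<in>{1..t}. L i) \<le> (\<Sum>i\<in>{1..t}. card (L i))"
    by (rule card_UN_le) simp
  then have "real (card (\<Union>i\<in>{1..t}. L i)) * d \<le> (\<Sum>i\<in>{1..t}. real (card (L i))) * d"
    using \<open>0 < d\<close> by (simp only: of_nat_sum[symmetric] of_nat_le_iff mult_le_cancel_right_pos)
  also have "\<dots> = (\<Sum>i\<in>{1..t}. real (card (L i)) * d)"
    by (rule sum_distrib_right)
  also have "\<dots> \<le> (\<Sum>i\<in>{1..t}. \<beta>\<^sup>2 * real (card A))"
    using jumbled_low_degree_card_le[OF jumbled_G finite_V assms(1)] assms(2)
    unfolding L_def d_def by (intro sum_mono) auto
  also have "\<dots> = real t * \<beta>\<^sup>2 * real (card A)"
    by simp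
  also have "\<dots> < d * real (card A)"
  proof -
    have "0 < card A"
      using assms(2) by (cases "card A = 0") auto
    then show ?thesis
      using assms(3) unfolding d_def by simp
  qed
  finally have "card (\<Union>i\<in>{1..t}. L i) < card A"
    using \<open>0 < d\<close> by (simp add: mult.commute)
  moreover have "(\<Union>i\<in>{1..t}. L i) \<subseteq> A"
    unfolding L_def by blast
  ultimately have "\<not> A \<subseteq> (\<Union>i\<in>{1..t}. L i)"
    by (metis order_less_irrefl subset_antisym)
  then obtain v where "v \<in> A" "\<forall>i\<in>{1..t}. v \<notin> L i"
    by blast
  then show ?thesis
    unfolding L_def by (auto simp: not_less)
qed

definition deficient :: "'v set \<Rightarrow> nat \<Rightarrow> ('v \<times> nat) set \<Rightarrow> bool" where
  "deficient T D Z \<longleftrightarrow> card (Gamma G V Z \<inter> T - fst ` Z) < D * card Z"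

lemma finite_pairs_in_colours: "Z \<subseteq> V \<times> {1..t} \<Longrightarrow> finite Z"
  using finite_V by (meson finite_SigmaI finite_atLeastAtMost finite_subset)

lemma deficient_card_le:
  assumes "T \<subseteq> V" "Z \<subseteq> V \<times> {1..t}" "deficient T D Z"
    and "real (card Z) \<le> k" "(real D + 1) * k + s \<le> real (card T)"
    and "real t * \<beta>\<^sup>2 \<le> (p * s)\<^sup>2" "0 \<le> s"
  shows "real (card Z) \<le> s"
proof (rule ccontr)
  assume "\<not> real (card Z) \<le> s"
  define Y where "Y = T - fst ` Z - Gamma G V Z"
  have "finite T"
    using assms(1) finite_V finite_subset by blast
  have "T \<subseteq> Y \<union> fst ` Z \<union> (Gamma G V Z \<inter> T - fst ` Z)"
    unfolding Y_def by blast
  moreover have "finite (Y \<union> fst ` Z \<union> (Gamma G V Z \<inter> T - fst ` Z))"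
    using \<open>finite T\<close> finite_pairs_in_colours[OF assms(2)] unfolding Y_def by blast
  ultimately have "card T \<le> card (Y \<union> fst ` Z \<union> (Gamma G V Z \<inter> T - fst ` Z))"
    by (rule card_mono[rotated])
  also have "\<dots> \<le> card Y + card (fst ` Z) + card (Gamma G V Z \<inter> T - fst ` Z)"
    using card_Un_le[of Y "fst ` Z"] card_Un_le[of "Y \<union> fst ` Z" "Gamma G V Z \<inter> T - fst ` Z"]
    by linarith
  also have "\<dots> < card Y + card Z + D * card Z"
    using assms(3) card_image_le[OF finite_pairs_in_colours[OF assms(2)], of fst]
    unfolding deficient_def by linarith
  finally have "real (card T) < real (card Y) + (real D + 1) * real (card Z)"
    by (simp add: algebra_simps flip: of_nat_add of_nat_mult)
  moreover have "(real D + 1) * real (card Z) \<le> (real D + 1) * k"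
    using assms(4) by (intro mult_left_mono) auto
  ultimately have "s < real (card Y)"
    using assms(5) by linarith
  then have "s * s < real (card Z) * real (card Y)"
    using \<open>\<not> real (card Z) \<le> s\<close> assms(7) by (intro mult_strict_mono') auto
  then have "(p * s)\<^sup>2 < real (card Z) * real (card Y) * p\<^sup>2"
    using p_pos by (simp add: power2_eq_square)
  moreover have "real (card Z) * real (card Y) * p\<^sup>2 \<le> real t * \<beta>\<^sup>2"
    using assms(1,2) unfolding Y_def by (intro no_edges_card_le) auto
  ultimately show False
    using assms(6) by linarith
qed

lemma deficient_Un_if_not_expanding:
  assumes "T \<subseteq> V" "card (Gamma G V B \<inter> T - fst ` B) \<le> D * card B" "finite B"
    and "X \<subseteq> (V - fst ` B) \<times> {1..t}" "\<not> D * card X \<le> card (Gamma G (V - fst ` B) X \<inter> T)"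
  shows "deficient T D (X \<union> B)"
proof -
  have "finite X"
    using assms(4) finite_pairs_in_colours by blast
  have "X \<inter> B = {}"
    using assms(4) by force
  have "Gamma G V (X \<union> B) \<inter> T - fst ` (X \<union> B)
      \<subseteq> (Gamma G (V - fst ` B) X \<inter> T) \<union> (Gamma G V B \<inter> T - fst ` B)"
    unfolding Gamma_def by auto
  moreover have "finite (Gamma G (V - fst ` B) X \<inter> T \<union> (Gamma G V B \<inter> T - fst ` B))"
    using assms(1) finite_V finite_subset by auto
  ultimately have "card (Gamma G V (X \<union> B) \<inter> T - fst ` (X \<union> B))
      \<le> card (Gamma G (V - fst ` B) X \<inter> T \<union> (Gamma G V B \<inter> T - fst ` B))"
    by (rule card_mono[rotated])
  also have "\<dots> \<le> card (Gamma G (V - fst ` B) X \<inter> T) + card (Gamma G V B \<inter> T - fst ` B)"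
    by (rule card_Un_le)
  also have "\<dots> < D * card (X \<union> B)"
    using assms(2,5) card_Un_disjoint[OF \<open>finite X\<close> assms(3) \<open>X \<inter> B = {}\<close>]
    by (simp add: algebra_simps)
  finally show ?thesis
    unfolding deficient_def .
qed

lemma exists_expanding_subset:
  assumes "T \<subseteq> V" "(3 * real D + 4) * s \<le> real (card T)" "real t * \<beta>\<^sup>2 \<le> (p * s)\<^sup>2" "0 \<le> s"
  obtains B where "B \<subseteq> V \<times> {1..t}" "real (card B) \<le> s"
    "\<And>X. X \<subseteq> (V - fst ` B) \<times> {1..t} \<Longrightarrow> real (card X) \<le> 2 * s
      \<Longrightarrow> D * card X \<le> card (Gamma G (V - fst ` B) X \<inter> T)"
proof -
  define P where "P Z \<longleftrightarrow> Z \<subseteq> V \<times> {1..t} \<and> real (card Z) \<le> 3 * s \<and> (Z = {} \<or> deficient T D Z)"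
    for Z
  have "P {}"
    unfolding P_def using assms(4) by simp
  moreover have "\<forall>Z. P Z \<longrightarrow> card Z < card (V \<times> {1..t}) + 1"
    unfolding P_def using finite_V by (metis card_mono finite_SigmaI finite_atLeastAtMost less_add_one le_less_trans)
  ultimately obtain B where "P B" and B_max: "\<And>Z. P Z \<Longrightarrow> card Z \<le> card B"
    by (metis ex_has_greatest_nat)
  then have B: "B \<subseteq> V \<times> {1..t}" "real (card B) \<le> 3 * s" "B = {} \<or> deficient T D B"
    unfolding P_def by auto
  have B_small: "real (card B) \<le> s"
    using B deficient_card_le[OF assms(1) B(1) _ B(2) _ assms(3,4)] assms(2,4)
    by (fastforce simp: algebra_simps)
  have "D * card X \<le> card (Gamma G (V - fst ` B) X \<inter> T)"
    if X: "X \<subseteq> (V - fst ` B) \<times> {1..t}" "real (card X) \<le> 2 * s" for X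
  proof (rule ccontr)
    assume not_expanding: "\<not> ?thesis"
    have "card (Gamma G V B \<inter> T - fst ` B) \<le> D * card B"
      using B(3) unfolding deficient_def Gamma_def by auto
    then have "deficient T D (X \<union> B)"
      using deficient_Un_if_not_expanding[OF assms(1) _ finite_pairs_in_colours[OF B(1)] X(1) not_expanding]
      by blast
    moreover have "X \<inter> B = {}"
      using X(1) by force
    then have card_XB: "card (X \<union> B) = card X + card B"
      using finite_pairs_in_colours[of X] finite_pairs_in_colours[OF B(1)] X(1)
      by (intro card_Un_disjoint) auto
    moreover have "X \<union> B \<subseteq> V \<times> {1..t}"
      using X(1) B(1) by blast
    ultimately have "P (X \<union> B)"
      unfolding P_def using X(2) B_small by simp
    then have "card X = 0"
      using B_max[of "X \<union> B"] card_XB by simp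
    then show False
      using not_expanding by simp
  qed
  then show ?thesis
    using that B(1) B_small by blast
qed

lemma exists_good_star_forest_embedding:
  assumes H: "colored_graph VH EH col t" "star_forest VH EH" "max_degree_le VH EH \<Delta>"
    and "0 \<le> s" "real t * \<beta>\<^sup>2 \<le> (p * s / 2)\<^sup>2"
    and "T \<subseteq> V" "(3 * real D + 4) * s \<le> real (card T)"
    and "real \<Delta> + p * s / 2 < p * a\<^sub>0"
    and "a\<^sub>0 + real (card VH) + real (card T) + s \<le> real (card V)"
  shows "\<exists>V' \<subseteq> V. real (card V) - s \<le> real (card V') \<and>
           (\<exists>\<phi>. good_embedding (2 * s) D t G V' VH EH col \<phi>)"
proof -
  have "(p * s / 2)\<^sup>2 \<le> (p * s)\<^sup>2"
    using p_pos \<open>0 \<le> s\<close> by (intro power_mono) auto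
  then have "real t * \<beta>\<^sup>2 \<le> (p * s)\<^sup>2"
    using assms(5) by linarith
  then obtain B where B: "B \<subseteq> V \<times> {1..t}" "real (card B) \<le> s"
    and expands: "\<And>X. X \<subseteq> (V - fst ` B) \<times> {1..t} \<Longrightarrow> real (card X) \<le> 2 * s
      \<Longrightarrow> D * card X \<le> card (Gamma G (V - fst ` B) X \<inter> T)"
    using exists_expanding_subset[OF assms(6,7)] \<open>0 \<le> s\<close> by blast
  define V' where "V' = V - fst ` B"
  have "card V - card B \<le> card V'"
    using card_image_le[OF finite_pairs_in_colours[OF B(1)], of fst] diff_card_le_card_Diff[of "fst ` B" V]
      finite_pairs_in_colours[OF B(1)] unfolding V'_def by simp
  then have "real (card V) - s \<le> real (card V')"
    using B(2) by linarith
  have "card V - card B - card T \<le> card (V' - T)"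
    using \<open>card V - card B \<le> card V'\<close> diff_card_le_card_Diff[of T V'] assms(6) finite_V finite_subset
    unfolding V'_def by fastforce
  then have size: "a\<^sub>0 + real (card VH) \<le> real (card (V' - T))"
    using assms(9) B(2) by linarith
  have high_degree: "\<exists>v\<in>A. \<forall>i\<in>{1..t}. \<Delta> \<le> card {w\<in>A. G i v w}"
    if "A \<subseteq> V' - T" "a\<^sub>0 \<le> real (card A)" for A
  proof (rule exists_high_degree_vertex)
    have "p * s / 2 < p * real (card A) - real \<Delta>"
      using assms(8) mult_left_mono[OF that(2) less_imp_le[OF p_pos]] by linarith
    moreover have "0 \<le> p * s / 2"
      using p_pos \<open>0 \<le> s\<close> by simp
    ultimately show "real t * \<beta>\<^sup>2 < (p * real (card A) - real \<Delta>)\<^sup>2"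
      using assms(5) power_strict_mono[of "p * s / 2" _ 2] by fastforce
    show "real \<Delta> < p * real (card A)" "A \<subseteq> V"
      using \<open>p * s / 2 < p * real (card A) - real \<Delta>\<close> \<open>0 \<le> p * s / 2\<close> that(1) unfolding V'_def by auto
  qed
  have "finite V'"
    using finite_V unfolding V'_def by blast
  then obtain \<phi> where "is_embedding VH EH col G (V' - T) \<phi>"
    using star_forest_embedding[OF H simple_graph_G finite_Diff[OF \<open>finite V'\<close>] high_degree size] by blast
  then have embedding: "is_embedding VH EH col G V' \<phi>" and "\<phi> ` VH \<inter> T = {}"
    unfolding is_embedding_def by blast+
  have "D * card X \<le> card (Gamma G V' X \<inter> T)" if "X \<subseteq> V' \<times> {1..t}" "real (card X) \<le> 2 * s" for X
    using expands that unfolding V'_def by blast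
  then have "good_embedding (2 * s) D t G V' VH EH col \<phi>"
    by (rule good_embedding_if_reservoir_expands[OF embedding \<open>\<phi> ` VH \<inter> T = {}\<close> \<open>finite V'\<close>])
  then show ?thesis
    using \<open>real (card V) - s \<le> real (card V')\<close> unfolding V'_def by blast
qed

end

lemma jumbled_scale_zero_or_ge_two:
  fixes p \<beta> :: real
  assumes "0 < p" "p < 1" "1 \<le> \<beta>"
  shows "2 * sqrt (real t) * \<beta> / p = 0 \<or> 2 \<le> 2 * sqrt (real t) * \<beta> / p"
proof (cases "t = 0")
  case False
  then have "1 \<le> sqrt (real t)"
    by simp
  moreover have "1 \<le> \<beta> / p"
    using assms by (simp add: field_simps)
  ultimately have "1 \<le> sqrt (real t) * (\<beta> / p)"
    by (rule mult_ge1_I)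
  then show ?thesis
    by simp
qed simp

lemma nat_between_mult_and_add_half:
  fixes a s :: real
  assumes "0 \<le> a" "s = 0 \<or> 2 \<le> s"
  obtains r :: nat where "a * s \<le> real r" "real r \<le> a * s + s / 2"
proof -
  have "0 \<le> a * s"
    using assms by auto
  then have "real (nat \<lceil>a * s\<rceil>) = of_int \<lceil>a * s\<rceil>"
    by simp
  then show ?thesis
    using that[of "nat \<lceil>a * s\<rceil>"] assms(2) ceiling_correct[of "a * s"] by auto
qed

theorem lemma3p6:
  fixes V :: "'v set" and G :: "nat \<Rightarrow> 'v \<Rightarrow> 'v \<Rightarrow> bool" and t :: nat
    and p \<beta> c :: real and D \<Delta> :: nat
    and VH :: "'h set" and EH :: "'h \<Rightarrow> 'h \<Rightarrow> bool" and col :: "'h \<Rightarrow> 'h \<Rightarrow> nat"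
  assumes "finite V"
    and "0 < c" and "c < 1" and "0 < p" and "p < 1" and "1 \<le> \<beta>" and "D \<ge> 3"
    and "\<forall>i\<in>{1..t}. jumbled V (G i) p \<beta>"
    and "\<Delta> > 0" and "real \<Delta> \<le> (1 - c) * p * real (card V)"
    and "colored_graph VH EH col t" and "star_forest VH EH" and "max_degree_le VH EH \<Delta>"
    and "real (card VH) + 5 * (2 * sqrt (real t) * \<beta> / p) * real D < c * real (card V) / 2"
  shows "\<exists>V' \<subseteq> V. real (card V') \<ge> real (card V) - 2 * sqrt (real t) * \<beta> / p \<and>
           (\<exists>\<phi>. good_embedding (2 * (2 * sqrt (real t) * \<beta> / p)) D t G V' VH EH col \<phi>)"
proof -
  interpret jumbled_family V G t p \<beta>
    using assms(1,4,8) by unfold_locales auto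
  define s where "s = 2 * sqrt (real t) * \<beta> / p"
  define n where "n = real (card V)"
  have s: "0 \<le> s" "real t * \<beta>\<^sup>2 = (p * s / 2)\<^sup>2" "s = 0 \<or> 2 \<le> s"
    using assms(4,6) jumbled_scale_zero_or_ge_two[OF assms(4,5,6)]
    unfolding s_def by (auto simp: power_mult_distrib power_divide)
  have small: "real (card VH) + 5 * (real D * s) < c * n / 2" "3 * s \<le> real D * s" "c * n \<le> n"
    using assms(14)[folded s_def n_def] mult_right_mono[of 3 "real D" s] assms(2,3,7) s(1)
    unfolding n_def by (auto simp: mult_ac mult_left_le_one_le)
  obtain r :: nat where r: "(3 * real D + 4) * s \<le> real r" "real r \<le> (3 * real D + 4) * s + s / 2"
    using nat_between_mult_and_add_half[of "3 * real D + 4", OF _ s(3)] by auto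
  then have "r \<le> card V"
    using small s(1) unfolding n_def by (simp add: algebra_simps)
  then obtain T where T: "T \<subseteq> V" "card T = r"
    by (meson obtain_subset_with_card_n)
  have "p * s < p * (c * n / 2)"
    using small s(1) assms(4) by (intro mult_strict_left_mono) linarith+
  then have "real \<Delta> + p * s / 2 < p * (n - 3 / 4 * (c * n))"
    using assms(10) unfolding n_def by (simp add: algebra_simps)
  moreover have "n - 3 / 4 * (c * n) + real (card VH) + real (card T) + s \<le> real (card V)"
    using T(2) r(2) small unfolding n_def by (simp add: algebra_simps)
  ultimately show ?thesis
    using exists_good_star_forest_embedding[OF assms(11-13) s(1) order_eq_refl[OF s(2)] T(1)]
      r(1) T(2) unfolding s_def by simp
qed

end
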